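(* Let $\alpha\in[0,1)$ be irrational and $f(x)=\{x\}-\tfrac12$. There exist absolute constants $A_0,C>0$ such that for every $K$ with $a_K\ge A_0$ and every integer $0\le b\le a_K$, $$\Big|S_{bq_{K-1}}(f,\alpha)-(-1)^K\frac b2\Big(1-\frac b{a_K}\Big)\Big|\le C.$$
   Context: $\alpha=[0;a_1,a_2,\dots]$ is the continued fraction expansion with convergent denominators $q_0=1,q_1=a_1,q_{k+1}=a_{k+1}q_k+q_{k-1}$. $\{x\}$ is the fractional part. $S_N(f,\alpha):=\sum_{n=1}^N f(n\alpha)-N\int_0^1f(x)\,dx$. *)

theory Defs
  imports "HOL-Analysis.Analysis"
begin

fun gauss_iter :: "real \<Rightarrow> nat \<Rightarrow> real" where
  "gauss_iter x 0 = x"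
| "gauss_iter x (Suc n) = frac (1 / gauss_iter x n)"

text \<open>Partial quotients: alpha = [0; a_1, a_2, ...], a_k = floor (1 / x_(k-1)) for k >= 1.\<close>
definition cf_a :: "real \<Rightarrow> nat \<Rightarrow> nat" where
  "cf_a x k = nat \<lfloor>1 / gauss_iter x (k - 1)\<rfloor>"

fun cf_q :: "real \<Rightarrow> nat \<Rightarrow> nat" where
  "cf_q x 0 = 1"
| "cf_q x (Suc 0) = cf_a x 1"
| "cf_q x (Suc (Suc n)) = cf_a x (Suc (Suc n)) * cf_q x (Suc n) + cf_q x n"

definition S_sum :: "nat \<Rightarrow> (real \<Rightarrow> real) \<Rightarrow> real \<Rightarrow> real" where
  "S_sum N f \<alpha> = (\<Sum>n = 1..N. f (real n * \<alpha>)) - real N * integral {0..1} f"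

end

theory Submission
  imports Defs "HOL-Number_Theory.Modular_Inverse"
begin

text \<open>Let q = q_(K-1), p = p_(K-1) and \<delta> = q \<alpha> - p. The classical formula for the
error of a convergent gives \<delta> = (-1)^(K-1) / D with D = q (a_K + x_K) + q_(K-2), where x_K
is the K-th iterate of the Gauss map, so that q a_K < D \<le> q a_K + 2 q. Since b q |\<delta>| < 1,
for 1 \<le> n \<le> b q the fractional part of n \<alpha> is (n p mod q + n \<delta>) / q, plus 1 when q divides n
and \<delta> < 0. As p is coprime to q, the residues n p mod q run through 0, ..., q - 1 once in every
period, and the sum evaluates exactly to S = \<delta> b (b q + 1) / 2 - sgn \<delta> b / 2. The difference
to (-1)^K (b/2) (1 - b/a_K) is, up to sign, half of b/D - b^2 (D - q a_K) / (a_K D), which lies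
in [-2, 1]. So one may take A_0 = C = 1.\<close>

lemma sum_periodic_blocks:
  fixes g :: "nat \<Rightarrow> 'a::comm_semiring_1"
  assumes periodic: "\<And>n. g (n + Q) = g n"
  shows "(\<Sum>n=1..b * Q. g n) = of_nat b * (\<Sum>n=1..Q. g n)"
proof (induction b)
  case (Suc b)
  have shift: "g (n + m * Q) = g n" for n m
  proof (induction m)
    case (Suc m)
    have "g (n + Suc m * Q) = g ((n + m * Q) + Q)"
      by (simp add: algebra_simps)
    then show ?case
      using Suc by (simp only: periodic)
  qed simp
  have "(\<Sum>n=1..Suc b * Q. g n) = (\<Sum>n=1..b * Q + Q. g n)"
    by (simp add: add.commute)
  also have "\<dots> = (\<Sum>n=1..b * Q. g n) + (\<Sum>n=b*Q+1..b*Q+Q. g n)"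
    by (rule sum.ub_add_nat) simp
  also have "(\<Sum>n=b*Q+1..b*Q+Q. g n) = (\<Sum>n=1..Q. g (n + b * Q))"
    using sum.shift_bounds_cl_nat_ivl[of g 1 "b * Q" Q] by (simp add: add.commute)
  also have "\<dots> = (\<Sum>n=1..Q. g n)"
    by (simp only: shift)
  finally show ?case
    using Suc by (simp add: algebra_simps)
qed simp

lemma sum_mult_mod_coprime:
  fixes p :: int and q :: nat
  assumes "coprime (int q) p"
  shows "(\<Sum>n=1..q. real_of_int ((int n * p) mod int q)) = real q * (real q - 1) / 2"
proof -
  have "{1..<int q} = int ` {1..<q}"
    using image_int_atLeastLessThan[of 1 q] by simp
  then have reindex: "(\<Sum>m=1..<int q. h m) = (\<Sum>n=1..<q. h (int n))" for h :: "int \<Rightarrow> real"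
    by (simp add: sum.reindex)
  have "(\<Sum>n=1..q. real_of_int ((int n * p) mod int q)) =
      (\<Sum>n=1..<q. real_of_int ((int n * p) mod int q))"
  proof (cases "q = 0")
    case False
    then have "{1..q} = insert q {1..<q}"
      by auto
    then show ?thesis
      by simp
  qed simp
  also have "\<dots> = (\<Sum>m=1..<int q. real_of_int ((p * m) mod int q))"
    by (simp add: reindex mult.commute)
  also have "\<dots> = (\<Sum>m=1..<int q. real_of_int m)"
    using assms
    by (intro sum.reindex_bij_betw bij_betw_int_remainders_mult) (simp add: coprime_commute)
  also have "\<dots> = (\<Sum>n=1..<q. real n)"
    by (simp add: reindex)
  also have "\<dots> = real q * (real q - 1) / 2"
    by (induction q) (auto simp: field_simps sum.atLeastLessThan_Suc)
  finally show ?thesis .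
qed

lemma sum_dvd_indicator:
  fixes q :: nat
  assumes "0 < q"
  shows "(\<Sum>n=1..q. if q dvd n then 1 else 0 :: real) = 1"
proof -
  have "{1..q} \<inter> {n. q dvd n} = {q}"
    using assms by (auto dest: dvd_imp_le)
  then show ?thesis
    by (simp add: sum.If_cases)
qed

lemma integral_sawtooth: "integral {0..1} (\<lambda>x::real. frac x - 1/2) = 0"
proof -
  have "((\<lambda>x::real. x^2/2 - x/2) has_vector_derivative (x - 1/2)) (at x within {0..1})" for x
    by (auto intro!: derivative_eq_intros
        simp: has_real_derivative_iff_has_vector_derivative[symmetric])
  then have "((\<lambda>x::real. x - 1/2) has_integral 0) {0..1}"
    using fundamental_theorem_of_calculus[of 0 1 "\<lambda>x::real. x^2/2 - x/2" "\<lambda>x. x - 1/2"] by simp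
  then have "((\<lambda>x::real. frac x - 1/2) has_integral 0) {0..1}"
    by (rule has_integral_spike_finite[where S = "{1}", rotated 2]) (auto simp: frac_eq)
  then show ?thesis
    by (rule integral_unique)
qed

lemma frac_residue_plus_small:
  fixes q :: nat and m r :: int and t :: real
  assumes "0 \<le> r" and "r < int q" and "\<bar>t\<bar> < 1" and "r = 0 \<Longrightarrow> t \<noteq> 0"
  shows "frac (m + (r + t) / q) = (r + t) / q + (if r = 0 \<and> t < 0 then 1 else 0)"
proof -
  define c :: real where "c = (if r = 0 \<and> t < 0 then 1 else 0)"
  have "1 \<le> real q"
    using assms(1,2) by linarith
  have "0 \<le> r + t + c * q \<and> r + t + c * q < q"
  proof (cases "r = 0")
    case True
    with assms(3,4) \<open>1 \<le> real q\<close> show ?thesis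
      by (auto simp: c_def abs_less_iff)
  next
    case False
    with assms(1,2) have "1 \<le> real_of_int r" and "real_of_int r \<le> real q - 1"
      by linarith+
    with assms(3) False show ?thesis
      by (auto simp: c_def abs_less_iff)
  qed
  then have "0 \<le> (r + t) / q + c" and "(r + t) / q + c < 1"
    using \<open>1 \<le> real q\<close> by (simp_all add: field_simps)
  moreover have "m + (r + t) / q - ((r + t) / q + c) \<in> \<int>"
    by (simp add: c_def)
  ultimately show ?thesis
    unfolding frac_unique_iff c_def by simp
qed

lemma frac_mult_near_rational:
  fixes q n :: nat and p :: int and \<alpha> \<delta> :: real
  assumes "0 < q" and "coprime (int q) p" and "real q * \<alpha> = p + \<delta>" and "\<delta> \<noteq> 0"
    and "1 \<le> n" and "real n * \<bar>\<delta>\<bar> < 1"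
  shows "frac (real n * \<alpha>) =
    (real_of_int ((int n * p) mod int q) + real n * \<delta>) / q + (if q dvd n \<and> \<delta> < 0 then 1 else 0)"
proof -
  define r where "r = (int n * p) mod int q"
  define m where "m = (int n * p) div int q"
  have "int n * p = int q * m + r"
    by (simp add: m_def r_def)
  then have "real n * p = real q * m + r"
    by (metis of_int_add of_int_mult of_int_of_nat_eq)
  have "real n * \<alpha> = real n * (p + \<delta>) / q"
    using assms(1) by (simp add: assms(3)[symmetric])
  also have "\<dots> = (real q * m + r + real n * \<delta>) / q"
    by (simp add: distrib_left \<open>real n * p = real q * m + r\<close>)
  also have "\<dots> = m + (r + real n * \<delta>) / q"
    using assms(1) by (simp add: field_simps)
  finally have "real n * \<alpha> = m + (r + real n * \<delta>) / q" .
  then have "frac (real n * \<alpha>) = (r + real n * \<delta>) / q + (if r = 0 \<and> real n * \<delta> < 0 then 1 else 0)"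
    using assms(1,4-6) by (simp only:) (intro frac_residue_plus_small; simp add: r_def abs_mult)
  moreover have "r = 0 \<longleftrightarrow> q dvd n"
    using assms(2) by (simp add: r_def mod_eq_0_iff_dvd coprime_dvd_mult_left_iff)
  moreover have "real n * \<delta> < 0 \<longleftrightarrow> \<delta> < 0"
    using assms(5) by (simp add: mult_less_0_iff)
  ultimately show ?thesis
    unfolding r_def[symmetric] by simp
qed

lemma sum_frac_mult_near_rational:
  fixes q b :: nat and p :: int and \<alpha> \<delta> :: real
  assumes "0 < q" and "coprime (int q) p" and "real q * \<alpha> = p + \<delta>" and "\<delta> \<noteq> 0"
    and small: "real (b * q) * \<bar>\<delta>\<bar> < 1"
  shows "(\<Sum>n=1..b * q. frac (real n * \<alpha>)) =
    real b * (real q - 1) / 2 + \<delta> * real b * (real b * real q + 1) / 2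
      + (if \<delta> < 0 then real b else 0)"
proof -
  define r where "r n = real_of_int ((int n * p) mod int q)" for n
  define c where "c n = (if q dvd n then 1 else 0 :: real)" for n
  define \<epsilon> :: real where "\<epsilon> = (if \<delta> < 0 then 1 else 0)"
  have frac_eq: "frac (real n * \<alpha>) = r n / q + \<delta> / q * real n + \<epsilon> * c n" if "n \<in> {1..b * q}" for n
  proof -
    have "real n \<le> real (b * q)"
      using that of_nat_le_iff atLeastAtMost_iff by blast
    then have "real n * \<bar>\<delta>\<bar> \<le> real (b * q) * \<bar>\<delta>\<bar>"
      by (rule mult_right_mono) simp
    with small that have "real n * \<bar>\<delta>\<bar> < 1"
      by linarith
    with assms(1-4) that show ?thesis
      by (simp add: frac_mult_near_rational r_def c_def \<epsilon>_def add_divide_distrib)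
  qed
  have r_periodic: "r (n + q) = r n" for n
    by (simp add: r_def algebra_simps)
  have c_periodic: "c (n + q) = c n" for n
    by (simp add: c_def)
  have "(\<Sum>n=1..b * q. frac (real n * \<alpha>)) = (\<Sum>n=1..b * q. r n / q + \<delta> / q * real n + \<epsilon> * c n)"
    by (rule sum.cong[OF refl frac_eq])
  also have "\<dots> = (\<Sum>n=1..b * q. r n) / q + \<delta> / q * (\<Sum>n=1..b * q. real n) + \<epsilon> * (\<Sum>n=1..b * q. c n)"
    by (simp add: sum.distrib sum_divide_distrib sum_distrib_left)
  also have "(\<Sum>n=1..b * q. r n) = real b * (real q * (real q - 1) / 2)"
    using sum_periodic_blocks[of r q b, OF r_periodic] sum_mult_mod_coprime[OF assms(2)]
    by (simp add: r_def)
  also have "(\<Sum>n=1..b * q. c n) = real b"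
    using sum_periodic_blocks[of c q b, OF c_periodic] sum_dvd_indicator[OF assms(1)]
    by (simp add: c_def)
  also have "(\<Sum>n=1..b * q. real n) = real b * real q * (real b * real q + 1) / 2"
    using double_gauss_sum_from_Suc_0[of "b * q", where 'a = real] by simp
  also have "real b * (real q * (real q - 1) / 2) / real q
      + \<delta> / real q * (real b * real q * (real b * real q + 1) / 2) + \<epsilon> * real b
      = real b * (real q - 1) / 2 + \<delta> * real b * (real b * real q + 1) / 2 + \<epsilon> * real b"
    using assms(1) by (simp add: field_simps)
  finally show ?thesis
    by (simp add: \<epsilon>_def)
qed

lemma S_sum_sawtooth_near_rational:
  fixes q b :: nat and p :: int and \<alpha> \<delta> :: real
  assumes "0 < q" and "coprime (int q) p" and "real q * \<alpha> = p + \<delta>" and "\<delta> \<noteq> 0"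
    and "real (b * q) * \<bar>\<delta>\<bar> < 1"
  shows "S_sum (b * q) (\<lambda>x. frac x - 1/2) \<alpha> =
    \<delta> * real b * (real b * real q + 1) / 2 - sgn \<delta> * real b / 2"
proof -
  have "S_sum (b * q) (\<lambda>x. frac x - 1/2) \<alpha> = (\<Sum>n=1..b * q. frac (real n * \<alpha>)) - real b * real q / 2"
    by (simp add: S_sum_def integral_sawtooth sum_subtractf)
  also have "\<dots> = real b * (real q - 1) / 2 + \<delta> * real b * (real b * real q + 1) / 2
      + (if \<delta> < 0 then real b else 0) - real b * real q / 2"
    by (simp only: sum_frac_mult_near_rational[OF assms])
  also have "\<dots> = \<delta> * real b * (real b * real q + 1) / 2 - sgn \<delta> * real b / 2"
    using assms(4) by (simp add: sgn_if field_simps)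
  finally show ?thesis .
qed

lemma convergent_main_term_bound:
  fixes a b q D :: real
  assumes "1 \<le> q" and "0 < a" and "0 \<le> b" and "b \<le> a" and "q * a \<le> D" and "D \<le> q * a + 2 * q"
  shows "\<bar>b * (b * q + 1) / D - b^2 / a\<bar> \<le> 2"
proof -
  have "a \<le> q * a"
    using assms(1,2) by simp
  with assms have "0 < D" and "b \<le> D"
    by linarith+
  have split: "b * (b * q + 1) / D - b^2 / a = b / D - b^2 * (D - q * a) / (a * D)"
    using \<open>0 < D\<close> assms(2) by (simp add: field_simps power2_eq_square)
  have "0 \<le> b / D" and "b / D \<le> 1"
    using \<open>0 < D\<close> \<open>b \<le> D\<close> assms(3) by simp_all
  have "b^2 * (D - q * a) \<le> a^2 * (2 * q)"
    using assms by (intro mult_mono power_mono) auto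
  also have "\<dots> = 2 * a * (q * a)"
    by (simp add: power2_eq_square)
  also have "\<dots> \<le> 2 * (a * D)"
    using assms(2,5) by simp
  finally have "b^2 * (D - q * a) / (a * D) \<le> 2"
    using \<open>0 < D\<close> assms(2) by (simp add: divide_le_eq)
  moreover have "0 \<le> b^2 * (D - q * a) / (a * D)"
    using \<open>0 < D\<close> assms(2,5) by simp
  ultimately show ?thesis
    using \<open>0 \<le> b / D\<close> \<open>b / D \<le> 1\<close> unfolding split by linarith
qed

text \<open>cf_den x k and cf_num x k are q_(k-1) and p_(k-1): the index is shifted by one so that
the recursion starts from q_(-1) = 0, p_(-1) = 1.\<close>

fun cf_den :: "real \<Rightarrow> nat \<Rightarrow> int" where
  "cf_den x 0 = 0"
| "cf_den x (Suc 0) = 1"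
| "cf_den x (Suc (Suc n)) = int (cf_a x (Suc n)) * cf_den x (Suc n) + cf_den x n"

fun cf_num :: "real \<Rightarrow> nat \<Rightarrow> int" where
  "cf_num x 0 = 1"
| "cf_num x (Suc 0) = 0"
| "cf_num x (Suc (Suc n)) = int (cf_a x (Suc n)) * cf_num x (Suc n) + cf_num x n"

lemma cf_den_Suc: "cf_den x (Suc k) = int (cf_q x k)"
  by (induction x k rule: cf_q.induct) auto

lemma cf_den_num_det: "cf_den x (Suc n) * cf_num x n - cf_num x (Suc n) * cf_den x n = (-1) ^ n"
  by (induction n) (simp_all add: algebra_simps)

lemma coprime_cf_den_num: "coprime (cf_den x (Suc n)) (cf_num x (Suc n))"
proof (rule coprimeI)
  fix c assume "c dvd cf_den x (Suc n)" and "c dvd cf_num x (Suc n)"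
  then have "c dvd cf_den x (Suc n) * cf_num x n - cf_num x (Suc n) * cf_den x n"
    by (intro dvd_diff dvd_mult2)
  then have "c dvd (-1) ^ n"
    by (simp only: cf_den_num_det)
  then show "is_unit c"
    by (metis dvd_unit_imp_unit is_unit_power_iff minus_dvd_iff one_dvd)
qed

lemma frac_inverse_notin_Rats:
  fixes x :: real
  assumes "x \<notin> \<rat>"
  shows "frac (1 / x) \<notin> \<rat>"
proof
  assume "frac (1 / x) \<in> \<rat>"
  moreover have "1 / x = frac (1 / x) + of_int \<lfloor>1 / x\<rfloor>"
    by (simp add: frac_def)
  ultimately have "1 / x \<in> \<rat>"
    by (metis Rats_add Rats_of_int)
  then have "1 / (1 / x) \<in> \<rat>"
    by (rule Rats_divide[OF Rats_1])
  with assms show False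
    by simp
qed

context
  fixes \<alpha> :: real
  assumes \<alpha>_nonneg: "0 \<le> \<alpha>" and \<alpha>_less_1: "\<alpha> < 1" and \<alpha>_irrational: "\<alpha> \<notin> \<rat>"
begin

lemma gauss_iter_irrational_in_unit_interval:
  "gauss_iter \<alpha> k \<notin> \<rat> \<and> 0 < gauss_iter \<alpha> k \<and> gauss_iter \<alpha> k < 1"
proof (induction k)
  case 0
  have "\<alpha> \<noteq> 0"
    using \<alpha>_irrational by auto
  with \<alpha>_nonneg \<alpha>_less_1 \<alpha>_irrational show ?case
    by simp
next
  case (Suc k)
  then have irrational: "frac (1 / gauss_iter \<alpha> k) \<notin> \<rat>"
    using frac_inverse_notin_Rats by blast
  then have "frac (1 / gauss_iter \<alpha> k) \<noteq> 0"
    by (metis Rats_0)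
  with irrational show ?case
    using frac_lt_1[of "1 / gauss_iter \<alpha> k"] by (simp add: order_less_le)
qed

lemma inverse_gauss_iter:
  "1 / gauss_iter \<alpha> k = real (cf_a \<alpha> (Suc k)) + gauss_iter \<alpha> (Suc k)"
proof -
  have "1 < 1 / gauss_iter \<alpha> k"
    using gauss_iter_irrational_in_unit_interval[of k] by simp
  then have "0 \<le> \<lfloor>1 / gauss_iter \<alpha> k\<rfloor>"
    by linarith
  then show ?thesis
    by (simp add: cf_a_def frac_def)
qed

lemma cf_a_ge_1: "1 \<le> cf_a \<alpha> (Suc k)"
proof -
  have "1 < 1 / gauss_iter \<alpha> k" and "gauss_iter \<alpha> (Suc k) < 1"
    using gauss_iter_irrational_in_unit_interval[of k]
      gauss_iter_irrational_in_unit_interval[of "Suc k"] by simp_all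
  then show ?thesis
    using inverse_gauss_iter[of k] by linarith
qed

lemma cf_den_bounds: "0 \<le> cf_den \<alpha> k \<and> cf_den \<alpha> k \<le> cf_den \<alpha> (Suc k) \<and> 1 \<le> cf_den \<alpha> (Suc k)"
proof (induction k)
  case (Suc k)
  have "1 * cf_den \<alpha> (Suc k) \<le> int (cf_a \<alpha> (Suc k)) * cf_den \<alpha> (Suc k)"
    using cf_a_ge_1[of k] Suc by (intro mult_right_mono) auto
  then have "cf_den \<alpha> (Suc k) \<le> cf_den \<alpha> (Suc (Suc k))"
    using Suc by (simp only: cf_den.simps) linarith
  with Suc show ?case
    by (auto simp del: cf_den.simps)
qed simp

lemma alpha_complete_quotient_formula:
  "\<alpha> * (cf_den \<alpha> (Suc k) + gauss_iter \<alpha> k * cf_den \<alpha> k) =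
    cf_num \<alpha> (Suc k) + gauss_iter \<alpha> k * cf_num \<alpha> k"
proof (induction k)
  case (Suc k)
  define x where "x = gauss_iter \<alpha> k"
  define y where "y = gauss_iter \<alpha> (Suc k)"
  have "x > 0"
    using gauss_iter_irrational_in_unit_interval[of k] by (simp add: x_def)
  have a: "real (cf_a \<alpha> (Suc k)) = 1 / x - y"
    using inverse_gauss_iter[of k] by (simp add: x_def y_def)
  have "\<alpha> * (cf_den \<alpha> (Suc (Suc k)) + y * cf_den \<alpha> (Suc k)) =
      \<alpha> * (cf_den \<alpha> (Suc k) + x * cf_den \<alpha> k) / x"
    using \<open>x > 0\<close> by (simp add: a field_simps)
  also have "\<dots> = (cf_num \<alpha> (Suc k) + x * cf_num \<alpha> k) / x"
    using Suc by (simp add: x_def)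
  also have "\<dots> = cf_num \<alpha> (Suc (Suc k)) + y * cf_num \<alpha> (Suc k)"
    using \<open>x > 0\<close> by (simp add: a field_simps)
  finally show ?case
    unfolding y_def .
qed simp

lemma cf_approx_error:
  "cf_den \<alpha> (Suc k) * \<alpha> - cf_num \<alpha> (Suc k) =
     (-1) ^ k / (cf_den \<alpha> (Suc k) * (cf_a \<alpha> (Suc k) + gauss_iter \<alpha> (Suc k)) + cf_den \<alpha> k)"
proof -
  define x where "x = gauss_iter \<alpha> k"
  define q where "q = real_of_int (cf_den \<alpha> (Suc k))"
  define q' where "q' = real_of_int (cf_den \<alpha> k)"
  define p where "p = real_of_int (cf_num \<alpha> (Suc k))"
  define p' where "p' = real_of_int (cf_num \<alpha> k)"
  have "x > 0"
    using gauss_iter_irrational_in_unit_interval[of k] by (simp add: x_def)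
  have "q \<ge> 1" "q' \<ge> 0"
    using cf_den_bounds[of k] by (simp_all add: q_def q'_def)
  with \<open>x > 0\<close> have "q + x * q' > 0"
    by (simp add: add_pos_nonneg)
  have det: "q * p' - p * q' = (-1) ^ k"
    using arg_cong[OF cf_den_num_det[of \<alpha> k], of real_of_int]
    by (simp add: q_def q'_def p_def p'_def)
  have "(q * \<alpha> - p) * (q + x * q') = q * (\<alpha> * (q + x * q')) - p * (q + x * q')"
    by (simp add: algebra_simps)
  also have "\<dots> = q * (p + x * p') - p * (q + x * q')"
    using alpha_complete_quotient_formula[of k] by (simp add: x_def q_def q'_def p_def p'_def)
  also have "\<dots> = x * (q * p' - p * q')"
    by (simp add: algebra_simps)
  also have "\<dots> = (-1) ^ k * x"
    by (simp add: det)
  finally have "q * \<alpha> - p = (-1) ^ k * x / (q + x * q')"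
    using \<open>q + x * q' > 0\<close> by (simp add: eq_divide_eq)
  also have "\<dots> = (-1) ^ k / (q * (1 / x) + q')"
    using \<open>x > 0\<close> by (simp add: field_simps)
  also have "q * (1 / x) + q' = q * (cf_a \<alpha> (Suc k) + gauss_iter \<alpha> (Suc k)) + q'"
    by (simp only: x_def inverse_gauss_iter)
  finally show ?thesis
    by (simp add: q_def q'_def p_def)
qed

lemma cf_approx_error_bounds:
  obtains D where "real (cf_q \<alpha> k) * \<alpha> - cf_num \<alpha> (Suc k) = (-1) ^ k / D"
    and "real (cf_q \<alpha> k) * cf_a \<alpha> (Suc k) < D"
    and "D \<le> real (cf_q \<alpha> k) * cf_a \<alpha> (Suc k) + 2 * real (cf_q \<alpha> k)"
proof -
  define q where "q = cf_q \<alpha> k"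
  define y where "y = gauss_iter \<alpha> (Suc k)"
  have q_eq: "cf_den \<alpha> (Suc k) = int q"
    by (simp add: q_def cf_den_Suc)
  have "0 < q" and "0 \<le> cf_den \<alpha> k" and "cf_den \<alpha> k \<le> q"
    using cf_den_bounds[of k] q_eq by simp_all
  have "0 < y" and "y < 1"
    using gauss_iter_irrational_in_unit_interval[of "Suc k"] by (simp_all add: y_def)
  with \<open>0 < q\<close> have "0 < real q * y" and "real q * y \<le> real q"
    by simp_all
  with \<open>0 \<le> cf_den \<alpha> k\<close> \<open>cf_den \<alpha> k \<le> q\<close> show ?thesis
    using that[of "real q * (cf_a \<alpha> (Suc k) + y) + cf_den \<alpha> k"] cf_approx_error[of k]
    by (simp add: q_eq q_def y_def algebra_simps)
qed

lemma S_sum_convergent_block: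
  assumes "b \<le> cf_a \<alpha> (Suc k)"
  shows "\<bar>S_sum (b * cf_q \<alpha> k) (\<lambda>x. frac x - 1/2) \<alpha>
           - (-1) ^ Suc k * (real b / 2) * (1 - real b / real (cf_a \<alpha> (Suc k)))\<bar> \<le> 1"
proof -
  define q where "q = cf_q \<alpha> k"
  define a where "a = real (cf_a \<alpha> (Suc k))"
  define e :: real where "e = (-1) ^ k"
  define \<delta> where "\<delta> = real q * \<alpha> - cf_num \<alpha> (Suc k)"
  obtain D where "\<delta> = e / D"
    and D_lower: "real q * a < D" and D_upper: "D \<le> real q * a + 2 * real q"
    using cf_approx_error_bounds[of k] unfolding q_def a_def e_def \<delta>_def by blast
  have "0 < q"
    using cf_den_bounds[of k] by (simp add: q_def cf_den_Suc)
  have "1 \<le> a"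
    using cf_a_ge_1[of k] by (simp add: a_def)
  with \<open>0 < q\<close> have "0 < real q * a"
    by simp
  with D_lower have "0 < D"
    by linarith
  have "e = 1 \<or> e = -1"
    by (simp add: e_def minus_one_power_iff)
  with \<open>\<delta> = e / D\<close> \<open>0 < D\<close> have "\<delta> \<noteq> 0" and "\<bar>\<delta>\<bar> = 1 / D" and "sgn \<delta> = e"
    by auto
  have "real b * real q \<le> a * real q"
    using assms by (intro mult_right_mono) (simp_all add: a_def)
  with D_lower \<open>0 < D\<close> have small: "real (b * q) * \<bar>\<delta>\<bar> < 1"
    by (simp add: \<open>\<bar>\<delta>\<bar> = 1 / D\<close> mult.commute)
  define S where "S = S_sum (b * q) (\<lambda>x. frac x - 1/2) \<alpha>"
  have "S = \<delta> * real b * (real b * real q + 1) / 2 - sgn \<delta> * real b / 2"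
    unfolding S_def using coprime_cf_den_num[of \<alpha> k] \<open>\<delta> \<noteq> 0\<close> small
    by (intro S_sum_sawtooth_near_rational[OF \<open>0 < q\<close>]) (simp_all add: \<delta>_def q_def cf_den_Suc)
  also have "\<dots> = e * real b * (real b * real q + 1) / (2 * D) - e * real b / 2"
    by (subst \<open>sgn \<delta> = e\<close>) (simp add: \<open>\<delta> = e / D\<close>)
  finally have S_eq: "S = e * real b * (real b * real q + 1) / (2 * D) - e * real b / 2" .
  define X where "X = real b * (real b * real q + 1) / D - (real b)^2 / a"
  have diff: "S - (-1) ^ Suc k * (real b / 2) * (1 - real b / a) = e * (X / 2)"
    using \<open>0 < D\<close> \<open>1 \<le> a\<close> by (simp add: S_eq X_def e_def field_simps power2_eq_square)
  have "\<bar>X\<bar> \<le> 2"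
    unfolding X_def using \<open>0 < q\<close> \<open>1 \<le> a\<close> assms D_lower D_upper
    by (intro convergent_main_term_bound) (simp_all add: a_def)
  moreover have "\<bar>e\<bar> = 1"
    using \<open>e = 1 \<or> e = -1\<close> by auto
  ultimately have "\<bar>S - (-1) ^ Suc k * (real b / 2) * (1 - real b / a)\<bar> \<le> 1"
    unfolding diff by (simp add: abs_mult)
  then show ?thesis
    by (simp add: S_def q_def a_def)
qed

end

theorem lemma3p6:
  shows "\<exists>A0 C :: real. A0 > 0 \<and> C > 0 \<and>
    (\<forall>\<alpha> :: real. 0 \<le> \<alpha> \<and> \<alpha> < 1 \<and> \<alpha> \<notin> \<rat> \<longrightarrow>
      (\<forall>K :: nat. K \<ge> 1 \<and> real (cf_a \<alpha> K) \<ge> A0 \<longrightarrow>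
        (\<forall>b :: nat. b \<le> cf_a \<alpha> K \<longrightarrow>
          \<bar>S_sum (b * cf_q \<alpha> (K - 1)) (\<lambda>x. frac x - 1/2) \<alpha>
            - (-1) ^ K * (real b / 2) * (1 - real b / real (cf_a \<alpha> K))\<bar> \<le> C)))"
proof (intro exI[of _ 1] conjI allI impI)
  fix \<alpha> :: real and K b :: nat
  assume \<alpha>: "0 \<le> \<alpha> \<and> \<alpha> < 1 \<and> \<alpha> \<notin> \<rat>" and K: "K \<ge> 1 \<and> real (cf_a \<alpha> K) \<ge> 1"
    and b: "b \<le> cf_a \<alpha> K"
  obtain k where k: "K = Suc k"
    using K by (cases K) auto
  have "\<bar>S_sum (b * cf_q \<alpha> k) (\<lambda>x. frac x - 1/2) \<alpha>
           - (-1) ^ Suc k * (real b / 2) * (1 - real b / real (cf_a \<alpha> (Suc k)))\<bar> \<le> 1"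
    using \<alpha> b unfolding k by (intro S_sum_convergent_block) auto
  then show "\<bar>S_sum (b * cf_q \<alpha> (K - 1)) (\<lambda>x. frac x - 1/2) \<alpha>
            - (-1) ^ K * (real b / 2) * (1 - real b / real (cf_a \<alpha> K))\<bar> \<le> 1"
    by (simp only: k diff_Suc_1)
qed simp_all

end
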